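(* Up to multiplication by a positive integer, every basic weight of a basic system of type $F_4$ is one of the following (coordinates $\lambda_k=\langle\lambda,e_k\rangle$): (1) $(F_4,2,2)$: $(2,0,-1,1)$, $(1,0,-2,1)$, $(0,-1,-2,1)$; (2) $(F_4,2,3)$: $(\tfrac32,\tfrac12,-\tfrac12,\tfrac12)$, $(1,0,-1,1)$, $(\tfrac12,\tfrac12,-\tfrac32,\tfrac12)$, $(\tfrac12,-\tfrac12,-\tfrac32,\tfrac12)$, $(-\tfrac12,-\tfrac12,-\tfrac32,\tfrac12)$; (3) $(F_4,3,2)$: $(2,1,0,-1)$, $(1,1,0,-2)$, $(1,0,-1,-2)$, $(0,1,-1,-2)$, $(-1,0,-1,-2)$; (4) $(F_4,3,3)$: $(1,1,0,-1)$, $(\tfrac12,\tfrac12,-\tfrac12,-\tfrac32)$, $(-\tfrac12,\tfrac12,-\tfrac12,-\tfrac32)$.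
   Context: $F_4$ is realized in $\mathbb R^4$ with orthonormal basis $e_1,\dots,e_4$ and standard inner product, simple roots $\alpha_1=e_2-e_3$, $\alpha_2=e_3-e_4$, $\alpha_3=e_4$, $\alpha_4=\tfrac12(e_1-e_2-e_3-e_4)$. Let $W$ be the Weyl group, $\alpha^\vee=2\alpha/\langle\alpha,\alpha\rangle$. A weight is integral if $\langle\lambda,\alpha^\vee\rangle\in\mathbb Z$ for all roots $\alpha$; $\overline\lambda$ is the dominant weight in $W\lambda$. For $I=\Delta\setminus\{\alpha_i\}$, $J=\Delta\setminus\{\alpha_j\}$, a basic weight of $(\Phi,i,j)$ is an integral $\lambda$ with $\langle\lambda,\alpha^\vee\rangle\in\mathbb Z_{>0}$ for all $\alpha\in I$ and $\{\alpha\in\Delta:\langle\overline\lambda,\alpha\rangle=0\}=J$; $(\Phi,i,j)$ is a basic system if it has a basic weight. *)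

theory Defs
  imports "HOL-Analysis.Analysis"
begin

definition vec4 :: "real \<Rightarrow> real \<Rightarrow> real \<Rightarrow> real \<Rightarrow> real^4" where
  "vec4 a b c d = vector [a, b, c, d]"

definition F4_roots :: "(real^4) set" where
  "F4_roots =
     {s *\<^sub>R axis k 1 | s k. s \<in> {-1, 1}}
   \<union> {s *\<^sub>R axis k 1 + t *\<^sub>R axis l 1 | s t k l. k \<noteq> l \<and> s \<in> {-1, 1} \<and> t \<in> {-1, 1}}
   \<union> {v. \<forall>k. v $ k \<in> {-1/2, 1/2}}"

definition F4_simple_root :: "nat \<Rightarrow> real^4" where
  "F4_simple_root i =
     (if i = 1 then vec4 0 1 (-1) 0
      else if i = 2 then vec4 0 0 1 (-1)
      else if i = 3 then vec4 0 0 0 1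
      else vec4 (1/2) (-1/2) (-1/2) (-1/2))"

definition F4_simple_roots :: "(real^4) set" where
  "F4_simple_roots = F4_simple_root ` {1..4}"

definition coroot :: "real^4 \<Rightarrow> real^4" where
  "coroot \<alpha> = (2 / (\<alpha> \<bullet> \<alpha>)) *\<^sub>R \<alpha>"

definition refl :: "real^4 \<Rightarrow> real^4 \<Rightarrow> real^4" where
  "refl \<alpha> x = x - (x \<bullet> coroot \<alpha>) *\<^sub>R \<alpha>"

inductive_set F4_weyl :: "(real^4 \<Rightarrow> real^4) set" where
  id: "id \<in> F4_weyl"
| step: "w \<in> F4_weyl \<Longrightarrow> \<alpha> \<in> F4_roots \<Longrightarrow> refl \<alpha> \<circ> w \<in> F4_weyl"

definition F4_integral :: "real^4 \<Rightarrow> bool" where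
  "F4_integral lam \<longleftrightarrow> (\<forall>\<alpha> \<in> F4_roots. lam \<bullet> coroot \<alpha> \<in> \<int>)"

definition F4_dominant :: "real^4 \<Rightarrow> bool" where
  "F4_dominant lam \<longleftrightarrow> (\<forall>\<alpha> \<in> F4_simple_roots. lam \<bullet> \<alpha> \<ge> 0)"

definition F4_dominant_rep :: "real^4 \<Rightarrow> real^4" where
  "F4_dominant_rep lam = (THE \<mu>. \<mu> \<in> (\<lambda>w. w lam) ` F4_weyl \<and> F4_dominant \<mu>)"

definition F4_basic_weight :: "nat \<Rightarrow> nat \<Rightarrow> real^4 \<Rightarrow> bool" where
  "F4_basic_weight i j lam \<longleftrightarrow>
     F4_integral lam \<and>
     (\<forall>\<alpha> \<in> F4_simple_roots - {F4_simple_root i}.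
         lam \<bullet> coroot \<alpha> \<in> \<int> \<and> lam \<bullet> coroot \<alpha> > 0) \<and>
     {\<alpha> \<in> F4_simple_roots. F4_dominant_rep lam \<bullet> \<alpha> = 0} = F4_simple_roots - {F4_simple_root j}"

definition F4_basic_system :: "nat \<Rightarrow> nat \<Rightarrow> bool" where
  "F4_basic_system i j \<longleftrightarrow> (\<exists>lam. F4_basic_weight i j lam)"

end

theory Submission
  imports Defs
begin

text \<open>
  Every integral weight \<open>\<lambda>\<close> has a dominant Weyl conjugate \<open>\<mu> = w \<lambda>\<close>: reflecting in a simple
  root on which the weight is negative raises its height \<open>\<langle>-, \<rho>\<rangle>\<close> by at least \<open>1/2\<close>, and the
  height is bounded by \<open>|\<lambda>| |\<rho>|\<close>. The conjugate is unique, because for dominant \<open>x\<close> and every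
  integral \<open>v\<close> with \<open>|v| = |\<omega>\<^sub>j|\<close> Cauchy-Schwarz and the half-integrality of pairings of
  integral weights give \<open>\<langle>x, v\<rangle> \<le> \<langle>x, \<omega>\<^sub>j\<rangle>\<close>, so that \<open>\<langle>x, \<omega>\<^sub>j\<rangle>\<close> is the maximum of an orbit
  invariant.

  For a basic weight of \<open>(F\<^sub>4, i, j)\<close> the dominant conjugate vanishes exactly on the simple
  roots other than \<open>\<alpha>\<^sub>j\<close>, so it is \<open>n \<omega>\<^sub>j\<close> with \<open>n\<close> a positive integer, and \<open>\<lambda> = n v\<close> where
  \<open>v = w\<^sup>-\<^sup>1 \<omega>\<^sub>j\<close> is integral, has the norm of \<open>\<omega>\<^sub>j\<close> and is positive on the simple roots other
  than \<open>\<alpha>\<^sub>i\<close>. In the coordinates \<open>2 v \<in> \<int>\<^sup>4\<close>, all of one parity, these conditions leave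
  only the vectors of the table, which is checked by exhaustive search.
\<close>

lemma vec4_nth [simp]:
  "vec4 a b c d $ 1 = a" "vec4 a b c d $ 2 = b" "vec4 a b c d $ 3 = c" "vec4 a b c d $ 4 = d"
  by (simp_all add: vec4_def vector_def)

lemma vec4_eq_iff: "x = vec4 a b c d \<longleftrightarrow> x $ 1 = a \<and> x $ 2 = b \<and> x $ 3 = c \<and> x $ 4 = d"
  by (auto simp: vec_eq_iff forall_4)

lemma inner_4: "(x :: real^4) \<bullet> y = x$1 * y$1 + x$2 * y$2 + x$3 * y$3 + x$4 * y$4"
  by (simp add: inner_vec_def sum_4)

lemma atLeastAtMost_1_4: "{1..4::nat} = {1, 2, 3, 4}"
  by auto

lemma axis_nth_if: "axis k (1::real) $ m = (if m = k then 1 else 0)"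
  by (simp add: axis_def)

lemma axis_nth_Ints: "axis k (1::real) $ m \<in> \<int>"
  by (simp add: axis_def)

lemma sum_axis: "(\<Sum>m\<in>UNIV. axis k (1::real) $ m) = 1"
  by (simp add: axis_def)

section \<open>Roots and integral weights\<close>

lemma F4_roots_cases:
  assumes "a \<in> F4_roots"
  obtains (short) s k where "s \<in> {-1, 1}" "a = s *\<^sub>R axis k 1"
  | (long) s t k l where "k \<noteq> l" "s \<in> {-1, 1}" "t \<in> {-1, 1}" "a = s *\<^sub>R axis k 1 + t *\<^sub>R axis l 1"
  | (half) "\<forall>k. a $ k \<in> {-1/2, 1/2}"
  using assms unfolding F4_roots_def by blast

lemma F4_roots_shortI: "s \<in> {-1, 1} \<Longrightarrow> s *\<^sub>R axis k 1 \<in> F4_roots"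
  unfolding F4_roots_def by (intro UnI1) blast

lemma F4_roots_longI:
  "k \<noteq> l \<Longrightarrow> s \<in> {-1, 1} \<Longrightarrow> t \<in> {-1, 1} \<Longrightarrow> s *\<^sub>R axis k 1 + t *\<^sub>R axis l 1 \<in> F4_roots"
  unfolding F4_roots_def by (intro UnI1 UnI2) blast

lemma F4_roots_halfI: "\<forall>k. a $ k \<in> {-1/2, 1/2} \<Longrightarrow> a \<in> F4_roots"
  unfolding F4_roots_def by (intro UnI2) simp

lemma half_sign_vector:
  fixes a :: "real^4"
  assumes "\<forall>k. a $ k \<in> {-1/2, 1/2}"
  shows "a \<bullet> a = 1" and "\<forall>k. 2 * a $ k \<in> \<int>" and "(\<Sum>k\<in>UNIV. a $ k) \<in> \<int>"
    and "\<forall>k. a $ k + 1/2 \<in> \<int>"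
proof -
  have sign: "x * x = 1/4" "2 * x \<in> \<int>" "x + 1/2 \<in> \<int>" if "x \<in> {-1/2, 1/2 :: real}" for x
    using that by fastforce+
  have "a $ k * a $ k = 1/4" for k using sign(1) assms by blast
  from this[of 1] this[of 2] this[of 3] this[of 4] show "a \<bullet> a = 1"
    unfolding inner_4 by linarith
  show "\<forall>k. 2 * a $ k \<in> \<int>" using sign(2) assms by blast
  show "\<forall>k. a $ k + 1/2 \<in> \<int>" using sign(3) assms by blast
  have "(\<Sum>k\<in>UNIV. a $ k + 1/2) - 2 \<in> \<int>"
    using sign(3) assms by (intro Ints_diff Ints_sum) auto
  then show "(\<Sum>k\<in>UNIV. a $ k) \<in> \<int>" by (simp add: sum.distrib)
qed

lemma F4_root_inner_self:
  assumes "a \<in> F4_roots"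
  shows "a \<bullet> a \<in> {1, 2}"
  using assms
proof (cases rule: F4_roots_cases)
  case (short s k)
  then show ?thesis by (auto simp: inner_axis_axis)
next
  case (long s t k l)
  then show ?thesis by (auto simp: inner_axis_axis algebra_simps)
next
  case half
  then show ?thesis using half_sign_vector(1) by blast
qed

lemma F4_root_nonzero: "a \<in> F4_roots \<Longrightarrow> a \<noteq> 0"
  using F4_root_inner_self by fastforce

lemma F4_coroot_Ints_even_sum:
  assumes "a \<in> F4_roots"
  shows "(\<forall>k. coroot a $ k \<in> \<int>) \<and> (\<Sum>k\<in>UNIV. coroot a $ k) / 2 \<in> \<int>"
  using assms
proof (cases rule: F4_roots_cases)
  case (short s k)
  then have "coroot a = (2 * s) *\<^sub>R axis k 1" by (auto simp: coroot_def inner_axis_axis)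
  with short show ?thesis by (auto simp: axis_nth_Ints sum_axis simp flip: sum_distrib_left)
next
  case (long s t k l)
  then have "coroot a = a" by (auto simp: coroot_def inner_axis_axis algebra_simps)
  with long show ?thesis
    by (auto simp: axis_nth_Ints sum_axis sum.distrib simp flip: sum_distrib_left)
next
  case half
  then have "coroot a = 2 *\<^sub>R a" by (simp add: coroot_def half_sign_vector(1))
  with half_sign_vector(2,3)[OF half] show ?thesis by (simp flip: sum_distrib_left)
qed

lemma inner_Ints_of_even_sum:
  fixes x c :: "real^4"
  assumes "2 * x $ 1 \<in> \<int>" "\<forall>k. x $ k - x $ 1 \<in> \<int>"
    and "\<forall>k. c $ k \<in> \<int>" "(\<Sum>k\<in>UNIV. c $ k) / 2 \<in> \<int>"
  shows "x \<bullet> c \<in> \<int>"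
proof -
  have "x \<bullet> c = (\<Sum>k\<in>UNIV. c $ k * (x $ k - x $ 1)) + (\<Sum>k\<in>UNIV. c $ k) / 2 * (2 * x $ 1)"
    by (simp add: inner_vec_def algebra_simps sum_subtractf sum_distrib_left sum_distrib_right)
  also have "\<dots> \<in> \<int>"
  proof (rule Ints_add)
    show "(\<Sum>k\<in>UNIV. c $ k * (x $ k - x $ 1)) \<in> \<int>" using assms by (intro Ints_sum Ints_mult) auto
    show "(\<Sum>k\<in>UNIV. c $ k) / 2 * (2 * x $ 1) \<in> \<int>" using assms(4,1) by (rule Ints_mult)
  qed
  finally show ?thesis .
qed

lemma F4_integral_iff: "F4_integral x \<longleftrightarrow> 2 * x $ 1 \<in> \<int> \<and> (\<forall>k. x $ k - x $ 1 \<in> \<int>)"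
proof
  assume int: "F4_integral x"
  have "1 *\<^sub>R axis 1 1 \<in> F4_roots" by (rule F4_roots_shortI) simp
  with int have "2 * x $ 1 \<in> \<int>"
    by (auto simp: F4_integral_def coroot_def inner_axis)
  moreover have "\<forall>k. x $ k - x $ 1 \<in> \<int>"
  proof
    fix k :: 4
    show "x $ k - x $ 1 \<in> \<int>"
    proof (cases "k = 1")
      case False
      then have "1 *\<^sub>R axis k 1 + (-1) *\<^sub>R axis 1 1 \<in> F4_roots" by (intro F4_roots_longI) simp_all
      with int have "x \<bullet> coroot (1 *\<^sub>R axis k 1 + (-1) *\<^sub>R axis 1 1) \<in> \<int>"
        unfolding F4_integral_def by blast
      with False show ?thesis
        by (simp add: coroot_def inner_axis inner_axis_axis axis_nth_if algebra_simps)
    qed simp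
  qed
  ultimately show "2 * x $ 1 \<in> \<int> \<and> (\<forall>k. x $ k - x $ 1 \<in> \<int>)" ..
next
  assume "2 * x $ 1 \<in> \<int> \<and> (\<forall>k. x $ k - x $ 1 \<in> \<int>)"
  then show "F4_integral x"
    unfolding F4_integral_def using inner_Ints_of_even_sum F4_coroot_Ints_even_sum by blast
qed

lemma F4_integral_of_Ints: "\<forall>k. x $ k \<in> \<int> \<Longrightarrow> F4_integral x"
  by (simp add: F4_integral_iff)

lemma F4_root_integral:
  assumes "a \<in> F4_roots"
  shows "F4_integral a"
  using assms
proof (cases rule: F4_roots_cases)
  case (short s k)
  then show ?thesis by (intro F4_integral_of_Ints) (auto simp: axis_nth_Ints)
next
  case (long s t k l)
  then show ?thesis by (intro F4_integral_of_Ints) (auto simp: axis_nth_Ints)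
next
  case half
  then have "a $ k - a $ 1 \<in> \<int>" for k
    using half_sign_vector(4)[OF half] Ints_diff[of "a $ k + 1/2" "a $ 1 + 1/2"] by simp
  then show ?thesis using half_sign_vector(2)[OF half] by (simp add: F4_integral_iff)
qed

lemma F4_integral_halves:
  assumes "F4_integral x"
  obtains a p q r :: int where "x = vec4 (a / 2) (a / 2 + p) (a / 2 + q) (a / 2 + r)"
proof -
  have "2 * x $ 1 \<in> \<int>" "x $ 2 - x $ 1 \<in> \<int>" "x $ 3 - x $ 1 \<in> \<int>" "x $ 4 - x $ 1 \<in> \<int>"
    using assms by (auto simp: F4_integral_iff)
  then obtain a p q r :: int
    where "2 * x $ 1 = a" "x $ 2 - x $ 1 = p" "x $ 3 - x $ 1 = q" "x $ 4 - x $ 1 = r"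
    by (elim Ints_cases)
  then show thesis by (intro that[of a p q r]) (simp add: vec4_eq_iff)
qed

lemma F4_integral_double_inner_Ints:
  assumes "F4_integral v" "F4_integral w"
  shows "2 * (v \<bullet> w) \<in> \<int>"
proof -
  obtain a p q r :: int where v: "v = vec4 (a / 2) (a / 2 + p) (a / 2 + q) (a / 2 + r)"
    using assms(1) by (rule F4_integral_halves)
  obtain b p' q' r' :: int where w: "w = vec4 (b / 2) (b / 2 + p') (b / 2 + q') (b / 2 + r')"
    using assms(2) by (rule F4_integral_halves)
  have "2 * (v \<bullet> w)
      = of_int (2 * a * b + a * (p' + q' + r') + b * (p + q + r) + 2 * (p * p' + q * q' + r * r'))"
    by (simp add: v w inner_4 algebra_simps)
  then show ?thesis by simp
qed

lemma F4_simple_root_in_roots: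
  assumes "k \<in> {1..4}"
  shows "F4_simple_root k \<in> F4_roots"
proof -
  have "F4_simple_root 1 = 1 *\<^sub>R axis 2 1 + (-1) *\<^sub>R axis (3::4) 1"
    "F4_simple_root 2 = 1 *\<^sub>R axis 3 1 + (-1) *\<^sub>R axis (4::4) 1"
    "F4_simple_root 3 = 1 *\<^sub>R axis (4::4) 1"
    "\<forall>m. F4_simple_root 4 $ m \<in> {-1/2, 1/2}"
    by (simp_all add: F4_simple_root_def vec_eq_iff forall_4 axis_nth_if)
  then show ?thesis
    using assms F4_roots_longI[of 2 3 1 "-1"] F4_roots_longI[of 3 4 1 "-1"]
      F4_roots_shortI[of 1 4] F4_roots_halfI[of "F4_simple_root 4"]
    unfolding atLeastAtMost_1_4 by fastforce
qed

lemma F4_simple_root_nonzero: "k \<in> {1..4} \<Longrightarrow> F4_simple_root k \<noteq> 0"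
  by (simp add: F4_root_nonzero F4_simple_root_in_roots)

lemma inj_on_F4_simple_root: "inj_on F4_simple_root {1..4}"
  unfolding inj_on_def atLeastAtMost_1_4 by (auto simp: F4_simple_root_def vec4_eq_iff)

lemma F4_simple_roots_diff:
  "k \<in> {1..4} \<Longrightarrow> F4_simple_roots - {F4_simple_root k} = F4_simple_root ` ({1..4} - {k})"
  unfolding F4_simple_roots_def by (simp add: inj_on_image_set_diff[OF inj_on_F4_simple_root])

lemma F4_simple_coroot:
  "coroot (F4_simple_root k) =
     (if k = 1 then vec4 0 1 (-1) 0 else if k = 2 then vec4 0 0 1 (-1)
      else if k = 3 then vec4 0 0 0 2 else vec4 1 (-1) (-1) (-1))"
  by (simp add: coroot_def F4_simple_root_def inner_4 vec4_eq_iff)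

lemma inner_coroot: "x \<bullet> coroot a = 2 / (a \<bullet> a) * (x \<bullet> a)"
  by (simp add: coroot_def)

lemma inner_coroot_sign:
  assumes "a \<noteq> 0"
  shows "0 \<le> x \<bullet> coroot a \<longleftrightarrow> 0 \<le> x \<bullet> a" and "0 < x \<bullet> coroot a \<longleftrightarrow> 0 < x \<bullet> a"
    and "x \<bullet> coroot a = 0 \<longleftrightarrow> x \<bullet> a = 0"
proof -
  have c: "0 < 2 / (a \<bullet> a)" using assms by simp
  show "0 \<le> x \<bullet> coroot a \<longleftrightarrow> 0 \<le> x \<bullet> a"
    unfolding inner_coroot using c by (metis mult_le_cancel_left_pos mult_zero_right)
  show "0 < x \<bullet> coroot a \<longleftrightarrow> 0 < x \<bullet> a"
    unfolding inner_coroot using c by (metis mult_less_cancel_left_pos mult_zero_right)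
  show "x \<bullet> coroot a = 0 \<longleftrightarrow> x \<bullet> a = 0"
    unfolding inner_coroot using c by simp
qed

section \<open>The Weyl group\<close>

lemma inner_refl_left: "refl a x \<bullet> y = x \<bullet> refl a y"
  by (simp add: refl_def coroot_def inner_diff_left inner_diff_right inner_commute)

lemma refl_refl: "a \<noteq> 0 \<Longrightarrow> refl a (refl a x) = x"
  by (simp add: refl_def coroot_def inner_diff_left algebra_simps)

lemma inner_refl_refl: "a \<noteq> 0 \<Longrightarrow> refl a x \<bullet> refl a y = x \<bullet> y"
  by (simp add: inner_refl_left refl_refl)

lemma refl_scaleR: "refl a (c *\<^sub>R x) = c *\<^sub>R refl a x"
  by (simp add: refl_def algebra_simps)

lemma F4_integral_refl:
  assumes "a \<in> F4_roots" "F4_integral x"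
  shows "F4_integral (refl a x)"
  unfolding F4_integral_def
proof
  fix b assume "b \<in> F4_roots"
  have "refl a x \<bullet> coroot b = x \<bullet> coroot b - (x \<bullet> coroot a) * (a \<bullet> coroot b)"
    by (simp add: refl_def inner_diff_left)
  also have "\<dots> \<in> \<int>"
    using assms \<open>b \<in> F4_roots\<close> F4_root_integral unfolding F4_integral_def
    by (intro Ints_diff Ints_mult) blast+
  finally show "refl a x \<bullet> coroot b \<in> \<int>" .
qed

lemma F4_weyl_refl: "a \<in> F4_roots \<Longrightarrow> refl a \<in> F4_weyl"
  using F4_weyl.step[OF F4_weyl.id] by simp

lemma F4_weyl_comp: "w \<in> F4_weyl \<Longrightarrow> w' \<in> F4_weyl \<Longrightarrow> w \<circ> w' \<in> F4_weyl"
proof (induction rule: F4_weyl.induct)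
  case id
  then show ?case by simp
next
  case (step w a)
  then have "refl a \<circ> (w \<circ> w') \<in> F4_weyl" by (intro F4_weyl.step)
  then show ?case by (simp only: comp_assoc)
qed

lemma F4_weyl_inverse: "w \<in> F4_weyl \<Longrightarrow> \<exists>u\<in>F4_weyl. \<forall>x. u (w x) = x"
proof (induction rule: F4_weyl.induct)
  case id
  show ?case using F4_weyl.id by (intro bexI[of _ id]) auto
next
  case (step w a)
  then obtain u where "u \<in> F4_weyl" "\<forall>x. u (w x) = x" by blast
  moreover have "\<forall>x. (u \<circ> refl a) ((refl a \<circ> w) x) = x"
    using calculation(2) refl_refl[OF F4_root_nonzero[OF step.hyps(2)]] by simp
  ultimately show ?case using F4_weyl_comp F4_weyl_refl step.hyps(2) by blast
qed

lemma F4_weyl_inner: "w \<in> F4_weyl \<Longrightarrow> w x \<bullet> w y = x \<bullet> y"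
  by (induction rule: F4_weyl.induct) (auto simp: inner_refl_refl F4_root_nonzero)

lemma F4_weyl_scaleR: "w \<in> F4_weyl \<Longrightarrow> w (c *\<^sub>R x) = c *\<^sub>R w x"
  by (induction rule: F4_weyl.induct) (auto simp: refl_scaleR)

lemma F4_weyl_integral: "w \<in> F4_weyl \<Longrightarrow> F4_integral x \<Longrightarrow> F4_integral (w x)"
  by (induction rule: F4_weyl.induct) (auto simp: F4_integral_refl)

section \<open>Fundamental weights and dominance\<close>

definition F4_fundamental_weight :: "nat \<Rightarrow> real^4" where
  "F4_fundamental_weight j =
     (if j = 1 then vec4 1 1 0 0 else if j = 2 then vec4 2 1 1 0
      else if j = 3 then vec4 (3/2) (1/2) (1/2) (1/2) else vec4 1 0 0 0)"

lemma F4_fundamental_weight_expansion: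
  "x = (\<Sum>k\<in>{1..4}. (x \<bullet> coroot (F4_simple_root k)) *\<^sub>R F4_fundamental_weight k)"
  unfolding atLeastAtMost_1_4
  by (simp add: F4_simple_coroot F4_fundamental_weight_def vec_eq_iff forall_4 inner_4
      algebra_simps)

lemma F4_fundamental_weight_multiple:
  assumes "j \<in> {1..4}" "\<forall>k\<in>{1..4} - {j}. x \<bullet> coroot (F4_simple_root k) = 0"
  shows "x = (x \<bullet> coroot (F4_simple_root j)) *\<^sub>R F4_fundamental_weight j"
proof -
  have "x = (\<Sum>k\<in>{1..4}. (x \<bullet> coroot (F4_simple_root k)) *\<^sub>R F4_fundamental_weight k)"
    by (rule F4_fundamental_weight_expansion)
  also have "\<dots> = (x \<bullet> coroot (F4_simple_root j)) *\<^sub>R F4_fundamental_weight j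
      + (\<Sum>k\<in>{1..4} - {j}. (x \<bullet> coroot (F4_simple_root k)) *\<^sub>R F4_fundamental_weight k)"
    using assms(1) by (intro sum.remove) auto
  also have "\<dots> = (x \<bullet> coroot (F4_simple_root j)) *\<^sub>R F4_fundamental_weight j"
    using assms(2) by (simp add: sum.neutral)
  finally show ?thesis .
qed

lemma F4_fundamental_weight_integral: "F4_integral (F4_fundamental_weight j)"
  by (simp add: F4_integral_iff forall_4 F4_fundamental_weight_def)

lemma F4_dominant_iff_coroot:
  "F4_dominant x \<longleftrightarrow> (\<forall>k\<in>{1..4}. 0 \<le> x \<bullet> coroot (F4_simple_root k))"
  by (simp add: F4_dominant_def F4_simple_roots_def inner_coroot_sign(1) F4_simple_root_nonzero)

lemma F4_eq_if_inner_fundamental_weights: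
  assumes "\<forall>j\<in>{1..4}. x \<bullet> F4_fundamental_weight j = y \<bullet> F4_fundamental_weight j"
  shows "x = y"
  using assms unfolding atLeastAtMost_1_4
  by (simp add: F4_fundamental_weight_def inner_4 vec_eq_iff forall_4)

lemma Ints_le_of_less_add_one:
  fixes s t :: real
  assumes "s \<in> \<int>" "t \<in> \<int>" "s < t + 1"
  shows "s \<le> t"
proof -
  obtain m n where "s = of_int m" "t = of_int n" using assms(1,2) by (elim Ints_cases)
  with assms(3) show ?thesis by simp
qed

text \<open>Cauchy-Schwarz leaves a gap of less than \<open>1/2\<close> above \<open>\<omega>\<^sub>k \<bullet> \<omega>\<^sub>j\<close>, and
  pairings of integral weights are half-integers.\<close>

lemma F4_fundamental_weight_inner_le:
  assumes "j \<in> {1..4}" "k \<in> {1..4}" "F4_integral v"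
    and "v \<bullet> v = F4_fundamental_weight j \<bullet> F4_fundamental_weight j"
  shows "F4_fundamental_weight k \<bullet> v \<le> F4_fundamental_weight k \<bullet> F4_fundamental_weight j"
proof -
  define t where "t = F4_fundamental_weight k \<bullet> v"
  define T where "T = F4_fundamental_weight k \<bullet> F4_fundamental_weight j"
  have gap: "(F4_fundamental_weight k \<bullet> F4_fundamental_weight k)
      * (F4_fundamental_weight j \<bullet> F4_fundamental_weight j) < (T + 1/2)\<^sup>2" and "0 \<le> T"
    using assms(1,2) unfolding T_def atLeastAtMost_1_4
    by (auto simp: F4_fundamental_weight_def inner_4 power2_eq_square)
  have "t\<^sup>2 \<le> (F4_fundamental_weight k \<bullet> F4_fundamental_weight k) * (v \<bullet> v)"
    unfolding t_def by (rule Cauchy_Schwarz_ineq)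
  with gap assms(4) have "t\<^sup>2 < (T + 1/2)\<^sup>2" by simp
  with \<open>0 \<le> T\<close> have "2 * t < 2 * T + 1"
    using power_less_imp_less_base[of t 2 "T + 1/2"] by simp
  moreover have "2 * t \<in> \<int>" "2 * T \<in> \<int>"
    unfolding t_def T_def using assms(3) F4_fundamental_weight_integral
    by (simp_all add: F4_integral_double_inner_Ints)
  ultimately show ?thesis
    unfolding t_def[symmetric] T_def[symmetric] using Ints_le_of_less_add_one by fastforce
qed

lemma F4_dominant_inner_le:
  assumes "F4_dominant x" "j \<in> {1..4}" "F4_integral v"
    and "v \<bullet> v = F4_fundamental_weight j \<bullet> F4_fundamental_weight j"
  shows "x \<bullet> v \<le> x \<bullet> F4_fundamental_weight j"
proof -
  define c where "c k = x \<bullet> coroot (F4_simple_root k)" for k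
  have expand: "x \<bullet> y = (\<Sum>k\<in>{1..4}. c k * (F4_fundamental_weight k \<bullet> y))" for y
  proof -
    have "x \<bullet> y = (\<Sum>k\<in>{1..4}. c k *\<^sub>R F4_fundamental_weight k) \<bullet> y"
      unfolding c_def by (rule arg_cong[where f = "\<lambda>z. z \<bullet> y", OF F4_fundamental_weight_expansion])
    then show ?thesis by (simp add: inner_sum_left)
  qed
  have "(\<Sum>k\<in>{1..4}. c k * (F4_fundamental_weight k \<bullet> v))
      \<le> (\<Sum>k\<in>{1..4}. c k * (F4_fundamental_weight k \<bullet> F4_fundamental_weight j))"
    using assms F4_fundamental_weight_inner_le unfolding c_def F4_dominant_iff_coroot
    by (intro sum_mono mult_left_mono) auto
  then show ?thesis by (simp only: expand)
qed

section \<open>The dominant conjugate\<close>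

lemma F4_dominant_conjugate_unique:
  assumes "F4_dominant x" "w \<in> F4_weyl" "F4_dominant (w x)"
  shows "w x = x"
proof (rule F4_eq_if_inner_fundamental_weights, intro ballI antisym)
  fix j :: nat assume j: "j \<in> {1..4}"
  obtain u where u: "u \<in> F4_weyl" "\<forall>z. u (w z) = z" using F4_weyl_inverse[OF assms(2)] by blast
  have "w x \<bullet> F4_fundamental_weight j = x \<bullet> u (F4_fundamental_weight j)"
    using F4_weyl_inner[OF u(1), of "w x"] u(2) by simp
  also have "\<dots> \<le> x \<bullet> F4_fundamental_weight j"
    using assms(1) j u(1) F4_fundamental_weight_integral
    by (intro F4_dominant_inner_le) (simp_all add: F4_weyl_integral F4_weyl_inner)
  finally show "w x \<bullet> F4_fundamental_weight j \<le> x \<bullet> F4_fundamental_weight j" .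
  have "x \<bullet> F4_fundamental_weight j = w x \<bullet> w (F4_fundamental_weight j)"
    using F4_weyl_inner[OF assms(2)] by simp
  also have "\<dots> \<le> w x \<bullet> F4_fundamental_weight j"
    using assms(2,3) j F4_fundamental_weight_integral
    by (intro F4_dominant_inner_le) (simp_all add: F4_weyl_integral F4_weyl_inner)
  finally show "x \<bullet> F4_fundamental_weight j \<le> w x \<bullet> F4_fundamental_weight j" .
qed

lemma F4_dominant_rep_eq:
  assumes "w \<in> F4_weyl" "F4_dominant (w x)"
  shows "F4_dominant_rep x = w x"
  unfolding F4_dominant_rep_def
proof (rule the_equality)
  show "w x \<in> (\<lambda>w. w x) ` F4_weyl \<and> F4_dominant (w x)" using assms by blast
next
  fix \<mu> assume "\<mu> \<in> (\<lambda>w. w x) ` F4_weyl \<and> F4_dominant \<mu>"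
  then obtain w' where w': "w' \<in> F4_weyl" "\<mu> = w' x" "F4_dominant \<mu>" by blast
  obtain u where u: "u \<in> F4_weyl" "\<forall>z. u (w z) = z" using F4_weyl_inverse[OF assms(1)] by blast
  have "(w' \<circ> u) (w x) = \<mu>" using u(2) w'(2) by simp
  moreover have "(w' \<circ> u) (w x) = w x"
    using F4_dominant_conjugate_unique[of "w x" "w' \<circ> u"] F4_weyl_comp[OF w'(1) u(1)]
      assms(2) w'(2,3) u(2)
    by simp
  ultimately show "\<mu> = w x" by simp
qed

text \<open>The sum of the fundamental weights.\<close>

definition F4_rho :: "real^4" where
  "F4_rho = vec4 (11/2) (5/2) (3/2) (1/2)"

lemma F4_rho_coroot: "k \<in> {1..4} \<Longrightarrow> F4_rho \<bullet> coroot (F4_simple_root k) = 1"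
  unfolding atLeastAtMost_1_4 by (auto simp: F4_rho_def F4_simple_coroot inner_4)

lemma F4_refl_simple_root_rho:
  assumes "F4_integral y" "k \<in> {1..4}" "y \<bullet> F4_simple_root k < 0"
  shows "y \<bullet> F4_rho + 1/2 \<le> refl (F4_simple_root k) y \<bullet> F4_rho"
proof -
  define a where "a = F4_simple_root k"
  have root: "a \<in> F4_roots" unfolding a_def using assms(2) by (rule F4_simple_root_in_roots)
  then have "a \<noteq> 0" by (rule F4_root_nonzero)
  have "y \<bullet> coroot a \<in> \<int>" using assms(1) root by (simp add: F4_integral_def)
  moreover have "y \<bullet> coroot a < 0"
    using assms(3) inner_coroot_sign(1)[OF \<open>a \<noteq> 0\<close>, of y] unfolding a_def by linarith
  ultimately have "y \<bullet> coroot a \<le> -1" by (elim Ints_cases) simp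
  have "2 / (a \<bullet> a) * (F4_rho \<bullet> a) = 1"
    using F4_rho_coroot[OF assms(2)] unfolding a_def[symmetric] inner_coroot .
  then have "a \<bullet> F4_rho = (a \<bullet> a) / 2" using \<open>a \<noteq> 0\<close> by (simp add: field_simps inner_commute)
  also have "\<dots> \<ge> 1/2" using F4_root_inner_self[OF root] by auto
  finally have "1 * (1/2) \<le> - (y \<bullet> coroot a) * (a \<bullet> F4_rho)"
    using \<open>y \<bullet> coroot a \<le> -1\<close> by (intro mult_mono) auto
  then show ?thesis unfolding a_def[symmetric] by (simp add: refl_def inner_diff_left)
qed

lemma F4_exists_dominant_conjugate:
  assumes "F4_integral x"
  shows "\<exists>w\<in>F4_weyl. F4_dominant (w x)"
proof -
  have "\<exists>w\<in>F4_weyl. F4_dominant (w y)"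
    if "F4_integral y" "norm y = norm x" "norm x * norm F4_rho - y \<bullet> F4_rho < real n / 2" for n y
    using that
  proof (induction n arbitrary: y)
    case 0
    then show ?case using norm_cauchy_schwarz[of y F4_rho] by simp
  next
    case (Suc n)
    show ?case
    proof (cases "F4_dominant y")
      case True
      with F4_weyl.id show ?thesis by (intro bexI[of _ id]) simp_all
    next
      case False
      then obtain k where k: "k \<in> {1..4}" "y \<bullet> F4_simple_root k < 0"
        by (auto simp: F4_dominant_def F4_simple_roots_def not_le)
      define a where "a = F4_simple_root k"
      have root: "a \<in> F4_roots" unfolding a_def using k(1) by (rule F4_simple_root_in_roots)
      have "\<exists>w\<in>F4_weyl. F4_dominant (w (refl a y))"
      proof (rule Suc.IH)
        show "F4_integral (refl a y)" using root Suc.prems(1) by (rule F4_integral_refl)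
        show "norm (refl a y) = norm x"
          using Suc.prems(2) F4_weyl_inner[OF F4_weyl_refl[OF root]]
          by (simp add: norm_eq_sqrt_inner)
        show "norm x * norm F4_rho - refl a y \<bullet> F4_rho < real n / 2"
          using Suc.prems(3) F4_refl_simple_root_rho[OF Suc.prems(1) k] unfolding a_def by simp
      qed
      then obtain w where "w \<in> F4_weyl" "F4_dominant (w (refl a y))" by blast
      then show ?thesis
        using F4_weyl_comp[OF _ F4_weyl_refl[OF root]] by (intro bexI[of _ "w \<circ> refl a"]) simp_all
    qed
  qed
  moreover have "d < real (nat \<lceil>2 * d\<rceil> + 1) / 2" for d :: real
    using real_nat_ceiling_ge[of "2 * d"] by simp
  ultimately show ?thesis using assms by blast
qed

lemma F4_dominant_rep_multiple:
  assumes "j \<in> {1..4}" "F4_integral lam"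
    and "{\<alpha> \<in> F4_simple_roots. F4_dominant_rep lam \<bullet> \<alpha> = 0} = F4_simple_roots - {F4_simple_root j}"
  obtains w and n :: nat where "w \<in> F4_weyl" "0 < n" "w lam = real n *\<^sub>R F4_fundamental_weight j"
proof -
  obtain w where w: "w \<in> F4_weyl" "F4_dominant (w lam)"
    using F4_exists_dominant_conjugate[OF assms(2)] by blast
  have zero_iff: "w lam \<bullet> F4_simple_root k = 0 \<longleftrightarrow> k \<noteq> j" if "k \<in> {1..4}" for k
  proof -
    have "w lam \<bullet> F4_simple_root k = 0 \<longleftrightarrow> F4_simple_root k \<noteq> F4_simple_root j"
      using assms(3) that unfolding F4_dominant_rep_eq[OF w] F4_simple_roots_def by blast
    also have "\<dots> \<longleftrightarrow> k \<noteq> j"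
      using inj_on_eq_iff[OF inj_on_F4_simple_root that assms(1)] by simp
    finally show ?thesis .
  qed
  define c where "c = w lam \<bullet> coroot (F4_simple_root j)"
  have c_\<omega>: "w lam = c *\<^sub>R F4_fundamental_weight j"
    unfolding c_def using assms(1) zero_iff
    by (intro F4_fundamental_weight_multiple)
      (auto simp: inner_coroot_sign(3) F4_simple_root_nonzero)
  have "c \<noteq> 0" "0 \<le> c"
    using zero_iff[OF assms(1)] assms(1) w(2) unfolding c_def
    by (auto simp: inner_coroot_sign(3) F4_simple_root_nonzero F4_dominant_iff_coroot)
  moreover have "c \<in> \<int>"
    unfolding c_def using F4_weyl_integral[OF w(1) assms(2)] F4_simple_root_in_roots[OF assms(1)]
    by (simp add: F4_integral_def)
  ultimately obtain n :: nat where "0 < n" "c = real n"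
    by (metis Ints_cases of_int_0 of_int_less_iff order_le_less zero_less_nat_eq of_nat_nat)
  show thesis by (rule that[OF w(1) \<open>0 < n\<close>]) (simp add: c_\<omega> \<open>c = real n\<close>)
qed

section \<open>Enumeration\<close>

text \<open>The basic weights of the table, up to scaling, in doubled coordinates \<open>2\<lambda>\<close>.\<close>

definition F4_basic_weights_doubled :: "nat \<Rightarrow> nat \<Rightarrow> (int \<times> int \<times> int \<times> int) list" where
  "F4_basic_weights_doubled i j =
     (if (i, j) = (2, 2) then [(4, 0, -2, 2), (2, 0, -4, 2), (0, -2, -4, 2)]
      else if (i, j) = (2, 3) then
        [(3, 1, -1, 1), (2, 0, -2, 2), (1, 1, -3, 1), (1, -1, -3, 1), (-1, -1, -3, 1)]
      else if (i, j) = (3, 2) then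
        [(4, 2, 0, -2), (2, 2, 0, -4), (2, 0, -2, -4), (0, 2, -2, -4), (-2, 0, -2, -4)]
      else if (i, j) = (3, 3) then [(2, 2, 0, -2), (1, 1, -1, -3), (-1, 1, -1, -3)]
      else [])"

lemma int_square_le_bound:
  fixes a :: int
  assumes "a * a \<le> 24"
  shows "a \<in> {-4..4}"
proof (rule ccontr)
  assume "a \<notin> {-4..4}"
  then have "5 * 5 \<le> \<bar>a\<bar> * \<bar>a\<bar>" by (intro mult_mono) auto
  with assms show False by (simp add: abs_mult_self_eq)
qed

text \<open>For \<open>(a, b, c, d) = 2 v\<close> the hypotheses say that \<open>v\<close> is integral, has the norm of
  \<open>\<omega>\<^sub>j\<close> and is positive on the simple roots other than \<open>\<alpha>\<^sub>i\<close>.\<close>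

lemma F4_basic_weights_doubled_complete:
  fixes a b c d :: int
  assumes "i \<in> {1..4}" "j \<in> {1..4}" "even (b - a)" "even (c - a)" "even (d - a)"
    and "of_int (a * a + b * b + c * c + d * d)
      = 4 * (F4_fundamental_weight j \<bullet> F4_fundamental_weight j)"
    and "i \<noteq> 1 \<longrightarrow> c < b" "i \<noteq> 2 \<longrightarrow> d < c" "i \<noteq> 3 \<longrightarrow> 0 < d" "i \<noteq> 4 \<longrightarrow> b + c + d < a"
  shows "(a, b, c, d) \<in> set (F4_basic_weights_doubled i j)"
proof -
  have "real_of_int (a * a + b * b + c * c + d * d)
      = real_of_int (if j = 1 then 8 else if j = 2 then 24 else if j = 3 then 12 else 4)"
    using assms(2,6) unfolding atLeastAtMost_1_4 by (auto simp: F4_fundamental_weight_def inner_4)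
  then have norm: "a * a + b * b + c * c + d * d
      = (if j = 1 then 8 else if j = 2 then 24 else if j = 3 then 12 else 4)"
    by (simp only: of_int_eq_iff)
  then have "a * a + b * b + c * c + d * d \<le> 24" by (simp split: if_splits)
  then have "a * a \<le> 24" "b * b \<le> 24" "c * c \<le> 24" "d * d \<le> 24"
    using zero_le_square[of a] zero_le_square[of b] zero_le_square[of c] zero_le_square[of d]
    by linarith+
  then have box: "a \<in> {-4..4}" "b \<in> {-4..4}" "c \<in> {-4..4}" "d \<in> {-4..4}"
    by (blast intro: int_square_le_bound)+
  have "\<forall>i\<in>{1..4}. \<forall>j\<in>{1..4}. \<forall>a\<in>{-4..4}. \<forall>b\<in>{-4..4}. \<forall>c\<in>{-4..4}. \<forall>d\<in>{-4..4::int}.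
    (i \<noteq> 1 \<longrightarrow> c < b) \<and> (i \<noteq> 2 \<longrightarrow> d < c) \<and> (i \<noteq> 3 \<longrightarrow> 0 < d) \<and> (i \<noteq> 4 \<longrightarrow> b + c + d < a) \<and>
    even (b - a) \<and> even (c - a) \<and> even (d - a) \<and>
    a * a + b * b + c * c + d * d
      = (if j = 1 then 8 else if j = 2 then 24 else if j = 3 then 12 else 4)
    \<longrightarrow> (a, b, c, d) \<in> set (F4_basic_weights_doubled i j)"
    unfolding atLeastAtMost_upt set_upto[symmetric] by code_simp
  with assms(1-5,7-10) norm box show ?thesis by blast
qed

definition halve4 :: "int \<times> int \<times> int \<times> int \<Rightarrow> real^4" where
  "halve4 = (\<lambda>(a, b, c, d). vec4 (a / 2) (b / 2) (c / 2) (d / 2))"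

lemma F4_basic_weights_complete:
  assumes "i \<in> {1..4}" "j \<in> {1..4}" "F4_integral v"
    and "v \<bullet> v = F4_fundamental_weight j \<bullet> F4_fundamental_weight j"
    and "\<forall>k\<in>{1..4} - {i}. 0 < v \<bullet> F4_simple_root k"
  shows "v \<in> halve4 ` set (F4_basic_weights_doubled i j)"
proof -
  obtain a p q r :: int where v: "v = vec4 (a / 2) (a / 2 + p) (a / 2 + q) (a / 2 + r)"
    using assms(3) by (rule F4_integral_halves)
  define b c d where "b = a + 2 * p" and "c = a + 2 * q" and "d = a + 2 * r"
  have v_halve: "v = halve4 (a, b, c, d)"
    by (simp add: v halve4_def b_def c_def d_def add_divide_distrib)
  have pos: "i \<noteq> k \<longrightarrow> 0 < v \<bullet> F4_simple_root k" if "k \<in> {1..4}" for k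
    using assms(5) that by blast
  have inner_4th: "v \<bullet> F4_simple_root 4 = of_int (a - (b + c + d)) / 4"
    by (simp add: v_halve halve4_def F4_simple_root_def inner_4 field_simps)
  have "(a, b, c, d) \<in> set (F4_basic_weights_doubled i j)"
  proof (rule F4_basic_weights_doubled_complete[OF assms(1,2)])
    show "even (b - a)" "even (c - a)" "even (d - a)" by (simp_all add: b_def c_def d_def)
    show "of_int (a * a + b * b + c * c + d * d)
        = 4 * (F4_fundamental_weight j \<bullet> F4_fundamental_weight j)"
      using assms(4) by (simp add: v_halve halve4_def inner_4 field_simps)
    show "i \<noteq> 1 \<longrightarrow> c < b" "i \<noteq> 2 \<longrightarrow> d < c" "i \<noteq> 3 \<longrightarrow> 0 < d" "i \<noteq> 4 \<longrightarrow> b + c + d < a"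
      using pos[of 1] pos[of 2] pos[of 3] pos[of 4] unfolding inner_4th
      by (simp_all add: v_halve halve4_def F4_simple_root_def inner_4 field_simps
          del: of_int_add of_int_diff)
  qed
  with v_halve show ?thesis by blast
qed

lemma halve4_F4_basic_weights_doubled:
  "halve4 ` set (F4_basic_weights_doubled i j) =
     (if (i, j) = (2, 2) then {vec4 2 0 (-1) 1, vec4 1 0 (-2) 1, vec4 0 (-1) (-2) 1}
      else if (i, j) = (2, 3) then
        {vec4 (3/2) (1/2) (-1/2) (1/2), vec4 1 0 (-1) 1, vec4 (1/2) (1/2) (-3/2) (1/2),
         vec4 (1/2) (-1/2) (-3/2) (1/2), vec4 (-1/2) (-1/2) (-3/2) (1/2)}
      else if (i, j) = (3, 2) then
        {vec4 2 1 0 (-1), vec4 1 1 0 (-2), vec4 1 0 (-1) (-2), vec4 0 1 (-1) (-2),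
         vec4 (-1) 0 (-1) (-2)}
      else if (i, j) = (3, 3) then
        {vec4 1 1 0 (-1), vec4 (1/2) (1/2) (-1/2) (-3/2), vec4 (-1/2) (1/2) (-1/2) (-3/2)}
      else {})"
  by (simp add: F4_basic_weights_doubled_def halve4_def)

lemma F4_basic_weight_in_table:
  assumes "i \<in> {1..4}" "j \<in> {1..4}" "F4_basic_weight i j lam"
  obtains n :: nat and v where "0 < n" "v \<in> halve4 ` set (F4_basic_weights_doubled i j)"
    and "lam = real n *\<^sub>R v"
proof -
  have int: "F4_integral lam"
    and pos: "\<forall>k\<in>{1..4} - {i}. 0 < lam \<bullet> coroot (F4_simple_root k)"
    and zeros: "{\<alpha> \<in> F4_simple_roots. F4_dominant_rep lam \<bullet> \<alpha> = 0}
      = F4_simple_roots - {F4_simple_root j}"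
    using assms(3) unfolding F4_basic_weight_def F4_simple_roots_diff[OF assms(1)] by auto
  obtain w and n :: nat
    where w: "w \<in> F4_weyl" and "0 < n" "w lam = real n *\<^sub>R F4_fundamental_weight j"
    using assms(2) int zeros by (rule F4_dominant_rep_multiple)
  obtain u where u: "u \<in> F4_weyl" "\<forall>x. u (w x) = x" using F4_weyl_inverse[OF w] by blast
  define v where "v = u (F4_fundamental_weight j)"
  have "lam = u (w lam)" using u(2) by simp
  also have "\<dots> = real n *\<^sub>R v"
    unfolding \<open>w lam = _\<close> v_def by (rule F4_weyl_scaleR[OF u(1)])
  finally have lam: "lam = real n *\<^sub>R v" .
  have "v \<in> halve4 ` set (F4_basic_weights_doubled i j)"
  proof (rule F4_basic_weights_complete[OF assms(1,2)])
    show "F4_integral v"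
      unfolding v_def using u(1) F4_fundamental_weight_integral by (rule F4_weyl_integral)
    show "v \<bullet> v = F4_fundamental_weight j \<bullet> F4_fundamental_weight j"
      unfolding v_def using u(1) by (rule F4_weyl_inner)
    show "\<forall>k\<in>{1..4} - {i}. 0 < v \<bullet> F4_simple_root k"
    proof
      fix k assume k: "k \<in> {1..4} - {i}"
      with pos lam \<open>0 < n\<close> have "0 < v \<bullet> coroot (F4_simple_root k)"
        by (simp add: zero_less_mult_iff)
      with k show "0 < v \<bullet> F4_simple_root k"
        by (simp add: inner_coroot_sign(2) F4_simple_root_nonzero)
    qed
  qed
  with \<open>0 < n\<close> lam show thesis by (intro that)
qed

theorem theorem5p12:
  fixes i j :: nat and lam :: "real^4"
  assumes "i \<in> {1..4}" and "j \<in> {1..4}"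
    and "F4_basic_system i j"
    and "F4_basic_weight i j lam"
  shows "\<exists>n::nat. n > 0 \<and>
    ((i = 2 \<and> j = 2 \<and> lam \<in> (\<lambda>\<mu>. real n *\<^sub>R \<mu>) `
        {vec4 2 0 (-1) 1, vec4 1 0 (-2) 1, vec4 0 (-1) (-2) 1})
   \<or> (i = 2 \<and> j = 3 \<and> lam \<in> (\<lambda>\<mu>. real n *\<^sub>R \<mu>) `
        {vec4 (3/2) (1/2) (-1/2) (1/2), vec4 1 0 (-1) 1, vec4 (1/2) (1/2) (-3/2) (1/2),
         vec4 (1/2) (-1/2) (-3/2) (1/2), vec4 (-1/2) (-1/2) (-3/2) (1/2)})
   \<or> (i = 3 \<and> j = 2 \<and> lam \<in> (\<lambda>\<mu>. real n *\<^sub>R \<mu>) `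
        {vec4 2 1 0 (-1), vec4 1 1 0 (-2), vec4 1 0 (-1) (-2), vec4 0 1 (-1) (-2),
         vec4 (-1) 0 (-1) (-2)})
   \<or> (i = 3 \<and> j = 3 \<and> lam \<in> (\<lambda>\<mu>. real n *\<^sub>R \<mu>) `
        {vec4 1 1 0 (-1), vec4 (1/2) (1/2) (-1/2) (-3/2), vec4 (-1/2) (1/2) (-1/2) (-3/2)}))"
proof -
  \<comment> \<open>\<open>F4_basic_system i j\<close> is implied by \<open>F4_basic_weight i j lam\<close>.\<close>
  obtain n v where "0 < n" "v \<in> halve4 ` set (F4_basic_weights_doubled i j)" "lam = real n *\<^sub>R v"
    using assms(1,2,4) by (rule F4_basic_weight_in_table)
  then have "lam \<in> (\<lambda>\<mu>. real n *\<^sub>R \<mu>) ` halve4 ` set (F4_basic_weights_doubled i j)" by blast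
  with \<open>0 < n\<close> show ?thesis
    unfolding halve4_F4_basic_weights_doubled by (intro exI[of _ n]) (auto split: if_splits)
qed

end
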